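(* Let $X$ be a Hausdorff, locally compact, arc connected space with at least two points, let $\mathcal I$ be an ideal on $X$ and $\alpha$ an infinite cardinal. Then for all $a,b\in X$ the groups $\mathfrak P^\alpha_{\mathcal I}(X,a)$ and $\mathfrak P^\alpha_{\mathcal I}(X,b)$ are isomorphic.
   Context: A space is arc connected if any two distinct points $p,q$ are joined by a continuous injective map $h:[0,1]\to X$ with $h(0)=p$, $h(1)=q$. An ideal on a set $X$ is a nonempty family $\mathcal I$ of subsets of $X$ closed under finite unions and under taking subsets. For a nonzero cardinal $\alpha$ and an ideal $\mathcal I$ on $X$, a continuous map $f:Z\to X$ is an $\alpha\frac{\mathcal I}{}$map if there is $A\in\mathcal I$ such that for every $x\in X\setminus A$ one has $|f^{-1}(x)|\le\alpha$ when $\alpha$ is finite, and $|f^{-1}(x)|<\alpha$ when $\alpha$ is infinite. An $\alpha\frac{\mathcal I}{}$loop with base point $a$ is an $\alpha\frac{\mathcal I}{}$map $f:[0,1]\to X$ with $f(0)=f(1)=a$. $\mathfrak P^\alpha_{\mathcal I}(X,a)$ denotes the subgroup of $\pi_1(X,a)$ generated by the homotopy classes (rel endpoints) of all $\alpha\frac{\mathcal I}{}$loops with base point $a$. *)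

theory Defs
  imports "HOL-Analysis.Analysis" "HOL-Library.Equipollence" "HOL-Algebra.Generated_Groups"
begin

text \<open>The space X is a subset of a Hausdorff type 'a, carrying the subspace topology.\<close>

definition arc_connected_set :: "'a::topological_space set \<Rightarrow> bool" where
  "arc_connected_set X \<longleftrightarrow>
     (\<forall>p\<in>X. \<forall>q\<in>X. p \<noteq> q \<longrightarrow>
        (\<exists>h. arc h \<and> path_image h \<subseteq> X \<and> pathstart h = p \<and> pathfinish h = q))"

definition is_ideal_on :: "'a set \<Rightarrow> 'a set set \<Rightarrow> bool" where
  "is_ideal_on X I \<longleftrightarrow> I \<noteq> {} \<and> (\<forall>A\<in>I. A \<subseteq> X)
     \<and> (\<forall>A\<in>I. \<forall>B\<in>I. A \<union> B \<in> I) \<and> (\<forall>A\<in>I. \<forall>B. B \<subseteq> A \<longrightarrow> B \<in> I)"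

definition loops :: "'a::topological_space set \<Rightarrow> 'a \<Rightarrow> (real \<Rightarrow> 'a) set" where
  "loops X a = {p. path p \<and> path_image p \<subseteq> X \<and> pathstart p = a \<and> pathfinish p = a}"

definition path_class :: "'a::topological_space set \<Rightarrow> (real \<Rightarrow> 'a) \<Rightarrow> (real \<Rightarrow> 'a) set" where
  "path_class X p = {q. homotopic_paths X p q}"

definition fundamental_group :: "'a::topological_space set \<Rightarrow> 'a \<Rightarrow> (real \<Rightarrow> 'a) set monoid" where
  "fundamental_group X a =
    \<lparr> carrier = path_class X ` loops X a,
      mult = (\<lambda>C D. {r. \<exists>p\<in>C. \<exists>q\<in>D. homotopic_paths X (p +++ q) r}),
      one = path_class X (\<lambda>t. a) \<rparr>"

text \<open>alpha-I-map from [0,1] to X, where the infinite cardinal alpha is given as the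
  cardinality of a set K: fibres of points outside some A in I have cardinality < |K|.\<close>
definition alpha_I_path :: "'b set \<Rightarrow> 'a set set \<Rightarrow> 'a::topological_space set \<Rightarrow> (real \<Rightarrow> 'a) \<Rightarrow> bool" where
  "alpha_I_path K I X f \<longleftrightarrow> path f \<and> path_image f \<subseteq> X \<and>
     (\<exists>A\<in>I. \<forall>x \<in> X - A. {t\<in>{0..1}. f t = x} \<prec> K)"

definition alpha_I_loops :: "'b set \<Rightarrow> 'a set set \<Rightarrow> 'a::topological_space set \<Rightarrow> 'a \<Rightarrow> (real \<Rightarrow> 'a) set" where
  "alpha_I_loops K I X a = {f. alpha_I_path K I X f \<and> f 0 = a \<and> f 1 = a}"

definition P_group :: "'b set \<Rightarrow> 'a set set \<Rightarrow> 'a::topological_space set \<Rightarrow> 'a \<Rightarrow> (real \<Rightarrow> 'a) set monoid" where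
  "P_group K I X a = (fundamental_group X a)
     \<lparr> carrier := generate (fundamental_group X a) (path_class X ` alpha_I_loops K I X a) \<rparr>"

end

theory Submission
  imports Defs
begin

text \<open>Choose an arc \<open>g\<close> from \<open>a\<close> to \<open>b\<close>. Conjugation \<open>p \<mapsto> g\<inverse> \<cdot> p \<cdot> g\<close> is the usual
  change-of-basepoint isomorphism of fundamental groups, and it maps \<open>\<alpha>\<close>-\<open>\<I>\<close>-loops at \<open>a\<close>
  to \<open>\<alpha>\<close>-\<open>\<I>\<close>-loops at \<open>b\<close>: since \<open>g\<close> is injective, each fibre of the conjugated loop
  is a copy of the corresponding fibre of \<open>p\<close> plus at most two points, and for infinite \<open>\<alpha>\<close>
  this does not affect the condition \<open>|f\<inverse>(x)| < \<alpha>\<close>. The same holds for \<open>g\<inverse>\<close>, so the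
  generating sets correspond and hence so do the generated subgroups.\<close>

text \<open>The library states the groupoid laws for paths with \<open>linepath\<close> constants, i.e. in
  real vector spaces only. In an arbitrary space they follow by pushing the laws for the path
  \<open>linepath 0 1\<close> in \<open>{0..1}\<close> forward along \<open>p\<close>.\<close>

lemma homotopic_paths_compose_unit_interval:
  assumes "homotopic_paths {0..1} q r" "path p" "path_image p \<subseteq> S"
  shows "homotopic_paths S (p \<circ> q) (p \<circ> r)"
  using assms by (intro homotopic_paths_continuous_image) (auto simp: path_def path_image_def)

lemma compose_linepath_0_1: "p \<circ> linepath 0 (1::real) = p"
  by (simp add: fun_eq_iff)

lemma homotopic_paths_join_const_right:
  assumes "path p" "path_image p \<subseteq> S"
  shows "homotopic_paths S (p +++ (\<lambda>t. pathfinish p)) p"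
proof -
  have "homotopic_paths {0..1} (linepath 0 1 +++ linepath 1 1) (linepath 0 (1::real))"
    using homotopic_paths_rid[of "linepath 0 (1::real)" "{0..1}"] by (simp add: closed_segment_eq_real_ivl)
  from homotopic_paths_compose_unit_interval[OF this assms] show ?thesis
    unfolding path_compose_join compose_linepath_0_1 linepath_refl by (simp add: comp_def pathfinish_def)
qed

lemma homotopic_paths_join_const_left:
  assumes "path p" "path_image p \<subseteq> S"
  shows "homotopic_paths S ((\<lambda>t. pathstart p) +++ p) p"
proof -
  have "homotopic_paths {0..1} (linepath 0 0 +++ linepath 0 1) (linepath 0 (1::real))"
    using homotopic_paths_lid[of "linepath 0 (1::real)" "{0..1}"] by (simp add: closed_segment_eq_real_ivl)
  from homotopic_paths_compose_unit_interval[OF this assms] show ?thesis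
    unfolding path_compose_join compose_linepath_0_1 linepath_refl by (simp add: comp_def pathstart_def)
qed

lemma homotopic_paths_join_reversepath:
  assumes "path p" "path_image p \<subseteq> S"
  shows "homotopic_paths S (p +++ reversepath p) (\<lambda>t. pathstart p)"
proof -
  have "homotopic_paths {0..1} (linepath 0 1 +++ reversepath (linepath 0 1)) (linepath 0 (0::real))"
    using homotopic_paths_rinv[of "linepath 0 (1::real)" "{0..1}"] by (simp add: closed_segment_eq_real_ivl)
  from homotopic_paths_compose_unit_interval[OF this assms] show ?thesis
    unfolding path_compose_join path_compose_reversepath compose_linepath_0_1 linepath_refl
    by (simp add: comp_def pathstart_def)
qed

lemma homotopic_paths_join_left:
  "\<lbrakk>homotopic_paths S q q'; path p; path_image p \<subseteq> S; pathfinish p = pathstart q\<rbrakk>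
    \<Longrightarrow> homotopic_paths S (p +++ q) (p +++ q')"
  by (simp add: homotopic_paths_join)

lemma homotopic_paths_join_right:
  "\<lbrakk>homotopic_paths S p p'; path q; path_image q \<subseteq> S; pathfinish p = pathstart q\<rbrakk>
    \<Longrightarrow> homotopic_paths S (p +++ q) (p' +++ q)"
  by (simp add: homotopic_paths_join)

definition conj_path :: "(real \<Rightarrow> 'a::topological_space) \<Rightarrow> (real \<Rightarrow> 'a) \<Rightarrow> real \<Rightarrow> 'a" where
  "conj_path g p = reversepath g +++ (p +++ g)"

lemma conj_path_loops:
  assumes "path g" "path_image g \<subseteq> X" "pathstart g = a" "pathfinish g = b" "p \<in> loops X a"
  shows "conj_path g p \<in> loops X b"
  using assms by (auto simp: loops_def conj_path_def subset_path_image_join)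

lemma homotopic_paths_conj_path:
  assumes "homotopic_paths X p p'" "path g" "path_image g \<subseteq> X"
    "pathstart g = pathfinish p" "pathstart p = pathfinish p"
  shows "homotopic_paths X (conj_path g p) (conj_path g p')"
  unfolding conj_path_def using assms
  by (intro homotopic_paths_join)
     (auto simp: homotopic_paths_imp_pathfinish homotopic_paths_imp_pathstart subset_path_image_join)

lemma homotopic_paths_conj_path_join:
  assumes g: "path g" "path_image g \<subseteq> X" "pathstart g = a"
    and p: "p \<in> loops X a" and q: "q \<in> loops X a"
  shows "homotopic_paths X (conj_path g (p +++ q)) (conj_path g p +++ conj_path g q)"
proof -
  have facts: "path p" "path_image p \<subseteq> X" "pathstart p = a" "pathfinish p = a"
    "path q" "path_image q \<subseteq> X" "pathstart q = a" "pathfinish q = a"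
    using p q by (auto simp: loops_def)
  note facts = facts g
  have "homotopic_paths X (g +++ (reversepath g +++ (q +++ g))) ((g +++ reversepath g) +++ (q +++ g))"
    using facts by (intro homotopic_paths_assoc) (simp_all add: path_image_join)
  also have "homotopic_paths X \<dots> ((\<lambda>t. a) +++ (q +++ g))"
    using facts homotopic_paths_join_reversepath[of g X]
    by (intro homotopic_paths_join_right) (simp_all add: path_image_join)
  also have "homotopic_paths X \<dots> (q +++ g)"
    using facts homotopic_paths_join_const_left[of "q +++ g" X] by (simp add: path_image_join)
  finally have cancel: "homotopic_paths X (g +++ (reversepath g +++ (q +++ g))) (q +++ g)" .
  have "homotopic_paths X (conj_path g p +++ conj_path g q)
          (reversepath g +++ ((p +++ g) +++ (reversepath g +++ (q +++ g))))"
    unfolding conj_path_def using facts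
    by (intro homotopic_paths_sym[OF homotopic_paths_assoc]) (simp_all add: path_image_join)
  also have "homotopic_paths X \<dots> (reversepath g +++ (p +++ (g +++ (reversepath g +++ (q +++ g)))))"
    using facts
    by (intro homotopic_paths_join_left homotopic_paths_sym[OF homotopic_paths_assoc])
       (simp_all add: path_image_join)
  also have "homotopic_paths X \<dots> (reversepath g +++ (p +++ (q +++ g)))"
    using facts cancel
    by (intro homotopic_paths_join_left) (simp_all add: path_image_join)
  also have "homotopic_paths X \<dots> (conj_path g (p +++ q))"
    unfolding conj_path_def using facts
    by (intro homotopic_paths_join_left homotopic_paths_assoc) (simp_all add: path_image_join)
  finally show ?thesis
    by (rule homotopic_paths_sym)
qed

lemma homotopic_paths_conj_path_reversepath:
  assumes g: "path g" "path_image g \<subseteq> X" "pathstart g = a"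
    and p: "p \<in> loops X a"
  shows "homotopic_paths X (conj_path (reversepath g) (conj_path g p)) p"
proof -
  have facts: "path p" "path_image p \<subseteq> X" "pathstart p = a" "pathfinish p = a"
    using p by (auto simp: loops_def)
  note facts = facts g
  have "homotopic_paths X (conj_path (reversepath g) (conj_path g p))
          (g +++ (reversepath g +++ ((p +++ g) +++ reversepath g)))"
    unfolding conj_path_def reversepath_reversepath using facts
    by (intro homotopic_paths_join_left homotopic_paths_sym[OF homotopic_paths_assoc])
       (simp_all add: path_image_join)
  also have "homotopic_paths X \<dots> (g +++ (reversepath g +++ (p +++ (g +++ reversepath g))))"
    using facts
    by (intro homotopic_paths_join_left homotopic_paths_sym[OF homotopic_paths_assoc])
       (simp_all add: path_image_join)
  also have "homotopic_paths X \<dots> (g +++ (reversepath g +++ (p +++ (\<lambda>t. a))))"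
    using facts homotopic_paths_join_reversepath[of g X]
    by (intro homotopic_paths_join_left) (simp_all add: path_image_join)
  also have "homotopic_paths X \<dots> (g +++ (reversepath g +++ p))"
    using facts homotopic_paths_join_const_right[of p X]
    by (intro homotopic_paths_join_left) (simp_all add: path_image_join)
  also have "homotopic_paths X \<dots> ((g +++ reversepath g) +++ p)"
    using facts by (intro homotopic_paths_assoc) (simp_all add: path_image_join)
  also have "homotopic_paths X \<dots> ((\<lambda>t. a) +++ p)"
    using facts homotopic_paths_join_reversepath[of g X]
    by (intro homotopic_paths_join_right) (simp_all add: path_image_join)
  also have "homotopic_paths X \<dots> p"
    using facts homotopic_paths_join_const_left[of p X] by simp
  finally show ?thesis .
qed

lemma path_class_eqI: "homotopic_paths X p q \<Longrightarrow> path_class X p = path_class X q"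
  unfolding path_class_def by (blast intro: homotopic_paths_sym homotopic_paths_trans)

lemma join_loops: "p \<in> loops X a \<Longrightarrow> q \<in> loops X a \<Longrightarrow> p +++ q \<in> loops X a"
  by (auto simp: loops_def subset_path_image_join)

lemma const_loops: "a \<in> X \<Longrightarrow> (\<lambda>t. a) \<in> loops X a"
  by (auto simp: loops_def path_def path_image_def pathstart_def pathfinish_def)

lemma reversepath_loops: "p \<in> loops X a \<Longrightarrow> reversepath p \<in> loops X a"
  by (auto simp: loops_def)

lemma carrier_fundamental_group: "carrier (fundamental_group X a) = path_class X ` loops X a"
  by (simp add: fundamental_group_def)

lemma one_fundamental_group: "\<one>\<^bsub>fundamental_group X a\<^esub> = path_class X (\<lambda>t. a)"
  by (simp add: fundamental_group_def)

lemma fundamental_group_mult: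
  assumes "p \<in> loops X a" "q \<in> loops X a"
  shows "path_class X p \<otimes>\<^bsub>fundamental_group X a\<^esub> path_class X q = path_class X (p +++ q)"
proof -
  have "{r. \<exists>p'\<in>path_class X p. \<exists>q'\<in>path_class X q. homotopic_paths X (p' +++ q') r}
        = path_class X (p +++ q)" (is "?prod = _")
  proof
    show "?prod \<subseteq> path_class X (p +++ q)"
    proof
      fix r
      assume "r \<in> ?prod"
      then obtain p' q' where "homotopic_paths X p p'" "homotopic_paths X q q'"
        and r: "homotopic_paths X (p' +++ q') r"
        by (auto simp: path_class_def)
      then have "homotopic_paths X (p +++ q) (p' +++ q')"
        using assms by (intro homotopic_paths_join) (auto simp: loops_def)
      with r show "r \<in> path_class X (p +++ q)"
        by (auto simp: path_class_def intro: homotopic_paths_trans)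
    qed
    have "p \<in> path_class X p" "q \<in> path_class X q"
      using assms by (auto simp: path_class_def loops_def)
    then show "path_class X (p +++ q) \<subseteq> ?prod"
      unfolding path_class_def by blast
  qed
  then show ?thesis
    by (simp add: fundamental_group_def)
qed

lemma group_fundamental_group:
  assumes "a \<in> X"
  shows "group (fundamental_group X a)"
proof (rule groupI)
  let ?G = "fundamental_group X a"
  show "x \<otimes>\<^bsub>?G\<^esub> y \<in> carrier ?G" if "x \<in> carrier ?G" "y \<in> carrier ?G" for x y
  proof -
    from that obtain p q where "p \<in> loops X a" "q \<in> loops X a" "x = path_class X p" "y = path_class X q"
      unfolding carrier_fundamental_group by blast
    then show ?thesis
      by (simp add: carrier_fundamental_group fundamental_group_mult join_loops)
  qed
  show "\<one>\<^bsub>?G\<^esub> \<in> carrier ?G"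
    using const_loops[OF assms] by (simp add: carrier_fundamental_group one_fundamental_group)
  show "x \<otimes>\<^bsub>?G\<^esub> y \<otimes>\<^bsub>?G\<^esub> z = x \<otimes>\<^bsub>?G\<^esub> (y \<otimes>\<^bsub>?G\<^esub> z)"
    if "x \<in> carrier ?G" "y \<in> carrier ?G" "z \<in> carrier ?G" for x y z
  proof -
    from that obtain p q r where pqr: "p \<in> loops X a" "q \<in> loops X a" "r \<in> loops X a"
      and xyz: "x = path_class X p" "y = path_class X q" "z = path_class X r"
      unfolding carrier_fundamental_group by blast
    have "path_class X (p +++ (q +++ r)) = path_class X ((p +++ q) +++ r)"
      using pqr unfolding loops_def by (intro path_class_eqI homotopic_paths_assoc) auto
    then show ?thesis
      using pqr by (simp add: xyz fundamental_group_mult join_loops)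
  qed
  show "\<one>\<^bsub>?G\<^esub> \<otimes>\<^bsub>?G\<^esub> x = x" if "x \<in> carrier ?G" for x
  proof -
    from that obtain p where p: "p \<in> loops X a" "x = path_class X p"
      unfolding carrier_fundamental_group by blast
    have "path_class X ((\<lambda>t. a) +++ p) = path_class X p"
      using p homotopic_paths_join_const_left[of p X] by (intro path_class_eqI) (simp add: loops_def)
    then show ?thesis
      using p const_loops[OF assms] by (simp add: one_fundamental_group fundamental_group_mult)
  qed
  show "\<exists>y\<in>carrier ?G. y \<otimes>\<^bsub>?G\<^esub> x = \<one>\<^bsub>?G\<^esub>" if "x \<in> carrier ?G" for x
  proof -
    from that obtain p where p: "p \<in> loops X a" "x = path_class X p"
      unfolding carrier_fundamental_group by blast
    have "path_class X (reversepath p +++ p) = path_class X (\<lambda>t. a)"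
      using p homotopic_paths_join_reversepath[of "reversepath p" X]
      by (intro path_class_eqI) (simp add: loops_def)
    then have "path_class X (reversepath p) \<otimes>\<^bsub>?G\<^esub> x = \<one>\<^bsub>?G\<^esub>"
      using p reversepath_loops[OF p(1)] by (simp add: one_fundamental_group fundamental_group_mult)
    then show ?thesis
      using reversepath_loops[OF p(1)] by (auto simp: carrier_fundamental_group)
  qed
qed

definition basepoint_change ::
    "'a::topological_space set \<Rightarrow> (real \<Rightarrow> 'a) \<Rightarrow> (real \<Rightarrow> 'a) set \<Rightarrow> (real \<Rightarrow> 'a) set" where
  "basepoint_change X g C = {r. \<exists>p\<in>C. homotopic_paths X (conj_path g p) r}"

lemma basepoint_change_path_class:
  assumes "path g" "path_image g \<subseteq> X" "pathstart g = a" "p \<in> loops X a"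
  shows "basepoint_change X g (path_class X p) = path_class X (conj_path g p)"
proof
  show "basepoint_change X g (path_class X p) \<subseteq> path_class X (conj_path g p)"
  proof
    fix r
    assume "r \<in> basepoint_change X g (path_class X p)"
    then obtain p' where "homotopic_paths X p p'" and r: "homotopic_paths X (conj_path g p') r"
      by (auto simp: basepoint_change_def path_class_def)
    then have "homotopic_paths X (conj_path g p) (conj_path g p')"
      using assms by (intro homotopic_paths_conj_path) (auto simp: loops_def)
    with r show "r \<in> path_class X (conj_path g p)"
      by (auto simp: path_class_def intro: homotopic_paths_trans)
  qed
  have "p \<in> path_class X p"
    using assms by (auto simp: path_class_def loops_def)
  then show "path_class X (conj_path g p) \<subseteq> basepoint_change X g (path_class X p)"
    unfolding basepoint_change_def path_class_def by blast
qed

lemma basepoint_change_reversepath_cancel: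
  assumes "path g" "path_image g \<subseteq> X" "pathstart g = a" "pathfinish g = b" "p \<in> loops X a"
  shows "basepoint_change X (reversepath g) (basepoint_change X g (path_class X p)) = path_class X p"
proof -
  have "conj_path g p \<in> loops X b"
    using assms by (rule conj_path_loops)
  then have "basepoint_change X (reversepath g) (basepoint_change X g (path_class X p))
             = path_class X (conj_path (reversepath g) (conj_path g p))"
    using assms by (simp add: basepoint_change_path_class)
  also have "\<dots> = path_class X p"
    using assms by (intro path_class_eqI homotopic_paths_conj_path_reversepath)
  finally show ?thesis .
qed

proposition basepoint_change_iso:
  assumes "path g" "path_image g \<subseteq> X" "pathstart g = a" "pathfinish g = b"
  shows "basepoint_change X g \<in> iso (fundamental_group X a) (fundamental_group X b)"
proof -
  let ?G = "fundamental_group X a" and ?H = "fundamental_group X b"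
  have rev: "path (reversepath g)" "path_image (reversepath g) \<subseteq> X"
    "pathstart (reversepath g) = b" "pathfinish (reversepath g) = a"
    using assms by auto
  have image_class: "basepoint_change X g (path_class X p) \<in> path_class X ` loops X b"
    if "p \<in> loops X a" for p
    using that assms by (simp add: basepoint_change_path_class conj_path_loops)
  have "basepoint_change X g \<in> hom ?G ?H"
  proof (rule homI)
    fix x y
    assume "x \<in> carrier ?G" "y \<in> carrier ?G"
    then obtain p q where p: "p \<in> loops X a" "x = path_class X p"
      and q: "q \<in> loops X a" "y = path_class X q"
      by (auto simp: carrier_fundamental_group)
    have "basepoint_change X g (x \<otimes>\<^bsub>?G\<^esub> y) = path_class X (conj_path g (p +++ q))"
      using p q assms by (simp add: fundamental_group_mult join_loops basepoint_change_path_class)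
    also have "\<dots> = path_class X (conj_path g p +++ conj_path g q)"
      using p q assms by (intro path_class_eqI homotopic_paths_conj_path_join)
    also have "\<dots> = basepoint_change X g x \<otimes>\<^bsub>?H\<^esub> basepoint_change X g y"
      using p q assms by (simp add: fundamental_group_mult conj_path_loops basepoint_change_path_class)
    finally show "basepoint_change X g (x \<otimes>\<^bsub>?G\<^esub> y)
                  = basepoint_change X g x \<otimes>\<^bsub>?H\<^esub> basepoint_change X g y" .
  qed (auto simp: carrier_fundamental_group image_class)
  moreover have "bij_betw (basepoint_change X g) (carrier ?G) (carrier ?H)"
  proof (rule bij_betw_byWitness)
    show "\<forall>x\<in>carrier ?G. basepoint_change X (reversepath g) (basepoint_change X g x) = x"
      using assms by (auto simp: carrier_fundamental_group basepoint_change_reversepath_cancel)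
    show "\<forall>y\<in>carrier ?H. basepoint_change X g (basepoint_change X (reversepath g) y) = y"
      using basepoint_change_reversepath_cancel[OF rev] by (auto simp: carrier_fundamental_group)
    show "basepoint_change X g ` carrier ?G \<subseteq> carrier ?H"
      by (auto simp: carrier_fundamental_group image_class)
    show "basepoint_change X (reversepath g) ` carrier ?H \<subseteq> carrier ?G"
      using rev by (auto simp: carrier_fundamental_group basepoint_change_path_class conj_path_loops)
  qed
  ultimately show ?thesis
    by (simp add: iso_def)
qed

lemma lesspoll_Un_finite:
  assumes "A \<prec> K" "finite F" "infinite K"
  shows "A \<union> F \<prec> K"
  using assms(2)
proof (induction F rule: finite_induct)
  case empty
  then show ?case
    using assms(1) by simp
next
  case (insert x F)
  show ?case
  proof (cases "finite (A \<union> F)")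
    case True
    then show ?thesis
      by (intro finite_lesspoll_infinite assms(3)) simp
  next
    case False
    then have "insert x (A \<union> F) \<approx> A \<union> F"
      by (rule infinite_insert_eqpoll)
    then show ?thesis
      using insert.IH eq_lesspoll_trans by fastforce
  qed
qed

lemma joinpaths_fibre_subset:
  "{t\<in>{0..1}. (g1 +++ g2) t = x}
     \<subseteq> (\<lambda>s. s/2) ` {t\<in>{0..1}. g1 t = x} \<union> (\<lambda>s. (s+1)/2) ` {t\<in>{0..1}. g2 t = x}"
proof
  fix t
  assume t: "t \<in> {t\<in>{0..1}. (g1 +++ g2) t = x}"
  show "t \<in> (\<lambda>s. s/2) ` {t\<in>{0..1}. g1 t = x} \<union> (\<lambda>s. (s+1)/2) ` {t\<in>{0..1}. g2 t = x}"
  proof (cases "t \<le> 1/2")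
    case True
    then have "2*t \<in> {t\<in>{0..1}. g1 t = x}"
      using t by (auto simp: joinpaths_def)
    then show ?thesis
      by (intro UnI1 image_eqI[where x="2*t"]) auto
  next
    case False
    then have "2*t-1 \<in> {t\<in>{0..1}. g2 t = x}"
      using t by (auto simp: joinpaths_def)
    then show ?thesis
      by (intro UnI2 image_eqI[where x="2*t-1"]) auto
  qed
qed

lemma finite_arc_fibre:
  assumes "arc g"
  shows "finite {t\<in>{0..1}. g t = x}"
proof -
  have "{t\<in>{0..1}. g t = x} = g -` {x} \<inter> {0..1}"
    by auto
  then show ?thesis
    using assms by (simp add: arc_def finite_vimage_IntI)
qed

lemma alpha_I_loops_subset_loops: "alpha_I_loops K I X a \<subseteq> loops X a"
  by (auto simp: alpha_I_loops_def alpha_I_path_def loops_def pathstart_def pathfinish_def)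

lemma conj_path_alpha_I_loops:
  assumes g: "arc g" "path_image g \<subseteq> X" "pathstart g = a" "pathfinish g = b"
    and "infinite K" and p: "p \<in> alpha_I_loops K I X a"
  shows "conj_path g p \<in> alpha_I_loops K I X b"
proof -
  obtain A where "A \<in> I" and A: "\<forall>x \<in> X - A. {t\<in>{0..1}. p t = x} \<prec> K"
    using p by (auto simp: alpha_I_loops_def alpha_I_path_def)
  have "conj_path g p \<in> loops X b"
    using g p alpha_I_loops_subset_loops by (blast intro: conj_path_loops arc_imp_path)
  moreover have "{t\<in>{0..1}. conj_path g p t = x} \<prec> K" if x: "x \<in> X - A" for x
  proof -
    let ?h1 = "\<lambda>s::real. s/2" and ?h2 = "\<lambda>s::real. (s+1)/2"
    let ?F = "?h1 ` {t\<in>{0..1}. reversepath g t = x} \<union> ?h2 ` ?h2 ` {t\<in>{0..1}. g t = x}"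
    have "{t\<in>{0..1}. conj_path g p t = x}
          \<subseteq> ?h1 ` {t\<in>{0..1}. reversepath g t = x} \<union> ?h2 ` {t\<in>{0..1}. (p +++ g) t = x}"
      unfolding conj_path_def by (rule joinpaths_fibre_subset)
    also have "\<dots> \<subseteq> (?h2 \<circ> ?h1) ` {t\<in>{0..1}. p t = x} \<union> ?F"
      using joinpaths_fibre_subset[of p g x] by (auto simp: image_comp)
    finally have "{t\<in>{0..1}. conj_path g p t = x} \<subseteq> (?h2 \<circ> ?h1) ` {t\<in>{0..1}. p t = x} \<union> ?F" .
    moreover have "(?h2 \<circ> ?h1) ` {t\<in>{0..1}. p t = x} \<union> ?F \<prec> K"
    proof (rule lesspoll_Un_finite)
      show "(?h2 \<circ> ?h1) ` {t\<in>{0..1}. p t = x} \<prec> K"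
        using A x by (blast intro: lesspoll_trans1[OF image_lepoll])
      show "finite ?F"
        using g(1) by (intro finite_UnI finite_imageI finite_arc_fibre arc_reversepath)
    qed fact
    ultimately show ?thesis
      by (blast intro: lesspoll_trans1 subset_imp_lepoll)
  qed
  ultimately show ?thesis
    using \<open>A \<in> I\<close> by (auto simp: alpha_I_loops_def alpha_I_path_def loops_def pathstart_def pathfinish_def)
qed

lemma basepoint_change_alpha_I_classes:
  assumes g: "arc g" "path_image g \<subseteq> X" "pathstart g = a" "pathfinish g = b" and "infinite K"
  shows "basepoint_change X g ` path_class X ` alpha_I_loops K I X a = path_class X ` alpha_I_loops K I X b"
proof
  have "path g"
    using g(1) by (rule arc_imp_path)
  have "basepoint_change X g (path_class X p) \<in> path_class X ` alpha_I_loops K I X b"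
    if "p \<in> alpha_I_loops K I X a" for p
  proof -
    have "p \<in> loops X a"
      using that alpha_I_loops_subset_loops by blast
    then have "basepoint_change X g (path_class X p) = path_class X (conj_path g p)"
      using \<open>path g\<close> g by (simp add: basepoint_change_path_class)
    then show ?thesis
      using conj_path_alpha_I_loops[OF assms that] by blast
  qed
  then show "basepoint_change X g ` path_class X ` alpha_I_loops K I X a
             \<subseteq> path_class X ` alpha_I_loops K I X b"
    by blast
  show "path_class X ` alpha_I_loops K I X b
        \<subseteq> basepoint_change X g ` path_class X ` alpha_I_loops K I X a"
  proof
    fix C
    assume "C \<in> path_class X ` alpha_I_loops K I X b"
    then obtain q where q: "q \<in> alpha_I_loops K I X b" and C: "C = path_class X q"
      by blast
    have rev: "arc (reversepath g)" "path (reversepath g)" "path_image (reversepath g) \<subseteq> X"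
      "pathstart (reversepath g) = b" "pathfinish (reversepath g) = a"
      using g by (auto simp: arc_reversepath arc_imp_path)
    have q_loop: "q \<in> loops X b"
      using q alpha_I_loops_subset_loops by blast
    have "conj_path (reversepath g) q \<in> alpha_I_loops K I X a"
      using conj_path_alpha_I_loops[OF rev(1,3-5) assms(5) q] .
    moreover have "basepoint_change X g (path_class X (conj_path (reversepath g) q)) = C"
      using basepoint_change_reversepath_cancel[OF rev(2-5) q_loop] rev q_loop
      by (simp add: C basepoint_change_path_class)
    ultimately show "C \<in> basepoint_change X g ` path_class X ` alpha_I_loops K I X a"
      by blast
  qed
qed

lemma P_group_eq_subgroup_generated:
  "P_group K I X a = subgroup_generated (fundamental_group X a) (path_class X ` alpha_I_loops K I X a)"
proof -
  have "carrier (fundamental_group X a) \<inter> path_class X ` alpha_I_loops K I X a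
        = path_class X ` alpha_I_loops K I X a"
    using alpha_I_loops_subset_loops[of K I X a] by (auto simp: carrier_fundamental_group)
  then show ?thesis
    by (simp add: P_group_def subgroup_generated_def)
qed

theorem theorem3p5:
  fixes X :: "'a::t2_space set" and I :: "'a set set" and K :: "'b set" and a b :: 'a
  assumes "locally_compact_space (top_of_set X)"
    and "arc_connected_set X"
    and "\<exists>p\<in>X. \<exists>q\<in>X. p \<noteq> q"
    and "is_ideal_on X I"
    and "infinite K"
    and "a \<in> X" and "b \<in> X"
  shows "P_group K I X a \<cong> P_group K I X b"
proof (cases "a = b")
  case True
  then show ?thesis
    by (simp add: iso_set_refl is_isoI)
next
  case False
  then obtain g where g: "arc g" "path_image g \<subseteq> X" "pathstart g = a" "pathfinish g = b"
    using assms(2,6,7) unfolding arc_connected_set_def by blast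
  let ?G = "fundamental_group X a" and ?H = "fundamental_group X b"
  have iso: "basepoint_change X g \<in> iso ?G ?H"
    using g by (intro basepoint_change_iso arc_imp_path)
  have "group_hom ?G ?H (basepoint_change X g)"
    using iso assms(6,7)
    by (simp add: group_hom_def group_hom_axioms_def group_fundamental_group iso_def)
  then have "basepoint_change X g \<in> iso (P_group K I X a) (P_group K I X b)"
    unfolding P_group_eq_subgroup_generated
    using iso g assms(5) image_mono[OF alpha_I_loops_subset_loops, of "path_class X" K I X a]
    by (intro group_hom.iso_between_subgroups basepoint_change_alpha_I_classes)
       (simp_all add: carrier_fundamental_group)
  then show ?thesis
    by (rule is_isoI)
qed

end
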